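(* Let $Z_1,\dots,Z_n$ be independent with $Z_i\sim N(\mu_i,1)$, $\mu_i\ge0$, $r_i=\mathbf 1(\mu_i>0)$, $p_i=1-\Phi(Z_i)$. Let $\alpha,\beta\in(0,1)$ and let $M_1\subset M_2\subset\dots\subset M_n$ be a fixed (non-random) nested sequence of subsets of $\{1,\dots,n\}$ with $|M_k|=k$. Consider the test that rejects iff there exists $k\in\{1,\dots,n\}$ with $\sum_{i\in M_k}h(p_i)>C_k^\alpha k^{1/2}$. Let $S_i(1)=\mathbb P(h(p_i)=1\mid r_i=1,\{M_k\}_{k=1}^n)$ and $S_i(0)=\mathbb P(h(p_i)=1\mid r_i=0,\{M_k\}_{k=1}^n)$. Then the test has power at least $1-\beta$ if $$\exists k\in\{1,\dots,n\}:\ \sum_{i\in M_k}\big(r_i(2S_i(1)-1)+(1-r_i)(2S_i(0)-1)\big)\ge\big(C_k^\alpha+C_k^\beta\big)k^{1/2},$$ and its power is less than $1-\beta$ if $$\forall k\in\{1,\dots,n\}:\ \sum_{i\in M_k}\big(r_i(2S_i(1)-1)+(1-r_i)(2S_i(0)-1)\big)\le\big(C_k^\alpha-C_k^{1-\beta}\big)k^{1/2}.$$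
   Context: $\Phi$ is the standard Gaussian CDF; $h(p)=2\cdot\mathbf 1\{p<0.5\}-1$. For $\gamma\in(0,1)$, $k\ge1$: $C_k^\gamma=1.7\sqrt{\log\log(2k)+0.72\log\frac{5.2}{\gamma}}$. Power is the probability of rejection. *)

theory Defs
  imports "HOL-Probability.Probability"
begin

definition Phi :: "real \<Rightarrow> real" where
  "Phi x = measure (density lborel std_normal_density) {..x}"

definition hfun :: "real \<Rightarrow> real" where
  "hfun p = 2 * (if p < 1/2 then 1 else 0) - 1"

definition Ccrit :: "nat \<Rightarrow> real \<Rightarrow> real" where
  "Ccrit k \<gamma> = 1.7 * sqrt (ln (ln (2 * real k)) + 0.72 * ln (5.2 / \<gamma>))"

definition Zmodel :: "nat \<Rightarrow> (nat \<Rightarrow> real) \<Rightarrow> (nat \<Rightarrow> real) measure" where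
  "Zmodel n \<mu> = (\<Pi>\<^sub>M i\<in>{1..n}. density lborel (normal_density (\<mu> i) 1))"

definition pval :: "real \<Rightarrow> real" where
  "pval z = 1 - Phi z"

definition rind :: "(nat \<Rightarrow> real) \<Rightarrow> nat \<Rightarrow> real" where
  "rind \<mu> i = (if \<mu> i > 0 then 1 else 0)"

text \<open>S_i(s) = P(h(p_i) = 1 | r_i = s) (the M_k are fixed, so conditioning on them is void).\<close>
definition Sfun :: "nat \<Rightarrow> (nat \<Rightarrow> real) \<Rightarrow> nat \<Rightarrow> real \<Rightarrow> real" where
  "Sfun n \<mu> i s = cond_prob (Zmodel n \<mu>) (\<lambda>\<omega>. hfun (pval (\<omega> i)) = 1) (\<lambda>\<omega>. rind \<mu> i = s)"

definition power :: "nat \<Rightarrow> (nat \<Rightarrow> real) \<Rightarrow> (nat \<Rightarrow> nat set) \<Rightarrow> real \<Rightarrow> real" where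
  "power n \<mu> M \<alpha> = measure (Zmodel n \<mu>)
     {\<omega> \<in> space (Zmodel n \<mu>). \<exists>k\<in>{1..n}. (\<Sum>i\<in>M k. hfun (pval (\<omega> i))) > Ccrit k \<alpha> * sqrt (real k)}"

definition signal :: "nat \<Rightarrow> (nat \<Rightarrow> real) \<Rightarrow> (nat \<Rightarrow> nat set) \<Rightarrow> nat \<Rightarrow> real" where
  "signal n \<mu> M k = (\<Sum>i\<in>M k. rind \<mu> i * (2 * Sfun n \<mu> i 1 - 1) + (1 - rind \<mu> i) * (2 * Sfun n \<mu> i 0 - 1))"

end

theory Submission
  imports Defs
begin

text \<open>
  Since p_i < 1/2 exactly when Phi(Z_i) > 1/2, the test only sees the independent signs
  h(p_i) = +-1, which equal 1 with probability S_i(r_i) >= 1/2 because mu_i >= 0. Listing the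
  indices in the order in which they enter the nested sets M_k turns the statistic into a +-1
  random walk W_k whose mean is the signal. By Hoeffding's lemma,
  exp(lambda (W_k - E W_k) - k lambda^2 / 2) is a supermartingale for every lambda, so by Ville's
  maximal inequality it ever reaches e^c with probability at most e^-c. For the first claim this
  is applied at the single k of the hypothesis with lambda = -C_k^beta / sqrt k. For the second,
  all k of an epoch 2^j <= k < 2^(j+1) are handled by one lambda, read off from the chord of
  C sqrt k over the epoch, and a union bound over the epochs gives a sum that the constants 1.7,
  0.72 and 5.2 keep below 1 - beta.
\<close>

section \<open>Independent coin flips\<close>

definition bernoulli_weight :: "real list \<Rightarrow> bool list \<Rightarrow> real" where
  "bernoulli_weight qs bs = (\<Prod>t<length qs. if bs!t then qs!t else 1 - qs!t)"

definition bernoulli_prob :: "real list \<Rightarrow> (bool list \<Rightarrow> bool) \<Rightarrow> real" where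
  "bernoulli_prob qs E = (\<Sum>bs | length bs = length qs \<and> E bs. bernoulli_weight qs bs)"

lemma bernoulli_weight_Cons:
  "bernoulli_weight (q # qs) (b # bs) = (if b then q else 1 - q) * bernoulli_weight qs bs"
proof -
  have "(\<Prod>t<length qs. if (b # bs) ! Suc t then (q # qs) ! Suc t else 1 - (q # qs) ! Suc t)
      = bernoulli_weight qs bs"
    unfolding bernoulli_weight_def by (simp only: nth_Cons_Suc)
  then show ?thesis
    unfolding bernoulli_weight_def length_Cons prod.lessThan_Suc_shift by simp
qed

lemma bernoulli_weight_nonneg: "set qs \<subseteq> {0..1} \<Longrightarrow> 0 \<le> bernoulli_weight qs bs"
  unfolding bernoulli_weight_def by (intro prod_nonneg) (auto dest!: nth_mem)

lemma finite_bool_lists: "finite {bs :: bool list. length bs = n \<and> E bs}"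
  by (rule finite_subset[OF _ finite_lists_length_eq[of "UNIV :: bool set" n]]) auto

lemma bernoulli_prob_Nil: "bernoulli_prob [] E = (if E [] then 1 else 0)"
proof -
  have "{bs :: bool list. length bs = 0 \<and> E bs} = (if E [] then {[]} else {})" by auto
  then show ?thesis unfolding bernoulli_prob_def by (simp add: bernoulli_weight_def)
qed

lemma bernoulli_prob_Cons:
  "bernoulli_prob (q # qs) E =
     q * bernoulli_prob qs (\<lambda>bs. E (True # bs)) + (1 - q) * bernoulli_prob qs (\<lambda>bs. E (False # bs))"
proof -
  let ?A = "{bs. length bs = length qs \<and> E (True # bs)}"
  let ?B = "{bs. length bs = length qs \<and> E (False # bs)}"
  have split: "{bs. length bs = length (q # qs) \<and> E bs} = Cons True ` ?A \<union> Cons False ` ?B"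
  proof (rule set_eqI)
    fix bs
    show "bs \<in> {bs. length bs = length (q # qs) \<and> E bs} \<longleftrightarrow> bs \<in> Cons True ` ?A \<union> Cons False ` ?B"
    proof (cases bs)
      case (Cons b bs')
      then show ?thesis by (cases b) (auto simp: image_iff)
    qed auto
  qed
  have "bernoulli_prob (q # qs) E =
      sum (bernoulli_weight (q # qs)) (Cons True ` ?A) + sum (bernoulli_weight (q # qs)) (Cons False ` ?B)"
    unfolding bernoulli_prob_def split by (rule sum.union_disjoint) (auto intro: finite_bool_lists)
  then show ?thesis
    by (simp add: sum.reindex bernoulli_weight_Cons bernoulli_prob_def sum_distrib_left)
qed

lemma bernoulli_prob_nonneg: "set qs \<subseteq> {0..1} \<Longrightarrow> 0 \<le> bernoulli_prob qs E"
  unfolding bernoulli_prob_def by (intro sum_nonneg bernoulli_weight_nonneg)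

lemma bernoulli_prob_mono:
  assumes "set qs \<subseteq> {0..1}" "\<And>bs. length bs = length qs \<Longrightarrow> E bs \<Longrightarrow> F bs"
  shows "bernoulli_prob qs E \<le> bernoulli_prob qs F"
  unfolding bernoulli_prob_def using assms
  by (intro sum_mono2 finite_bool_lists bernoulli_weight_nonneg) auto

lemma bernoulli_prob_compl: "bernoulli_prob qs E + bernoulli_prob qs (\<lambda>bs. \<not> E bs) = 1"
proof (induction qs arbitrary: E)
  case Nil
  then show ?case by (simp add: bernoulli_prob_Nil)
next
  case (Cons q qs)
  have "bernoulli_prob (q # qs) E + bernoulli_prob (q # qs) (\<lambda>bs. \<not> E bs)
      = q * (bernoulli_prob qs (\<lambda>bs. E (True # bs)) + bernoulli_prob qs (\<lambda>bs. \<not> E (True # bs)))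
      + (1 - q) * (bernoulli_prob qs (\<lambda>bs. E (False # bs)) + bernoulli_prob qs (\<lambda>bs. \<not> E (False # bs)))"
    unfolding bernoulli_prob_Cons by (simp only: distrib_left add_ac)
  then show ?case
    using Cons.IH[of "\<lambda>bs. E (True # bs)"] Cons.IH[of "\<lambda>bs. E (False # bs)"] by simp
qed

lemma bernoulli_prob_le_1: "set qs \<subseteq> {0..1} \<Longrightarrow> bernoulli_prob qs E \<le> 1"
  using bernoulli_prob_compl[of qs E] bernoulli_prob_nonneg[of qs "\<lambda>bs. \<not> E bs"] by linarith

lemma bernoulli_prob_eq_sum_if:
  "bernoulli_prob qs E = (\<Sum>bs | length bs = length qs. if E bs then bernoulli_weight qs bs else 0)"
  unfolding bernoulli_prob_def
  using sum.inter_filter[OF finite_bool_lists[of "length qs" "\<lambda>_. True"], of "bernoulli_weight qs" E]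
  by (simp add: conj_commute)

lemma bernoulli_prob_ex_le_sum:
  assumes "set qs \<subseteq> {0..1}" "finite J"
  shows "bernoulli_prob qs (\<lambda>bs. \<exists>j\<in>J. E j bs) \<le> (\<Sum>j\<in>J. bernoulli_prob qs (E j))"
proof -
  let ?w = "\<lambda>j bs. if E j bs then bernoulli_weight qs bs else 0"
  have "bernoulli_prob qs (\<lambda>bs. \<exists>j\<in>J. E j bs) \<le> (\<Sum>bs | length bs = length qs. \<Sum>j\<in>J. ?w j bs)"
    unfolding bernoulli_prob_eq_sum_if
  proof (rule sum_mono)
    fix bs
    show "(if \<exists>j\<in>J. E j bs then bernoulli_weight qs bs else 0) \<le> (\<Sum>j\<in>J. ?w j bs)"
    proof (cases "\<exists>j\<in>J. E j bs")
      case True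
      then obtain j where "j \<in> J" "E j bs" by blast
      then show ?thesis
        using member_le_sum[of j J "\<lambda>j. ?w j bs"] assms bernoulli_weight_nonneg by auto
    qed (simp add: sum_nonneg bernoulli_weight_nonneg assms)
  qed
  also have "\<dots> = (\<Sum>j\<in>J. bernoulli_prob qs (E j))"
    unfolding bernoulli_prob_eq_sum_if by (rule sum.swap)
  finally show ?thesis .
qed

section \<open>Hoeffding's lemma and Ville's inequality for coin flips\<close>

lemma hoeffding_lemma_coin_nonneg:
  fixes q l :: real
  assumes "0 \<le> q" "q \<le> 1" "0 \<le> l"
  shows "q * exp (l * (2 - 2 * q)) + (1 - q) * exp (- (l * (2 * q))) \<le> exp (l\<^sup>2 / 2)"
proof -
  have pos: "0 < 1 + q * (exp (2 * l) - 1)"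
    using assms by (simp add: add_pos_nonneg)
  have "q * exp (l * (2 - 2 * q)) + (1 - q) * exp (- (l * (2 * q)))
      = exp (- (2 * l) * q) * (1 + q * (exp (2 * l) - 1))"
    by (simp add: algebra_simps flip: exp_add)
  also have "\<dots> = exp (- (2 * l) * q + ln (1 + q * (exp (2 * l) - 1)))"
    using pos by (simp only: exp_add exp_ln)
  also have "\<dots> \<le> exp ((2 * l)\<^sup>2 / 8)"
    using Hoeffdings_lemma_aux[of "2 * l" q] assms by simp
  finally show ?thesis
    by (simp add: power2_eq_square)
qed

lemma hoeffding_lemma_coin:
  fixes q l :: real
  assumes "0 \<le> q" "q \<le> 1"
  shows "q * exp (l * (1 - (2 * q - 1))) + (1 - q) * exp (l * (-1 - (2 * q - 1))) \<le> exp (l\<^sup>2 / 2)"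
proof (cases "0 \<le> l")
  case True
  then show ?thesis
    using hoeffding_lemma_coin_nonneg[OF assms True] by (simp add: algebra_simps)
next
  case False
  then show ?thesis
    using hoeffding_lemma_coin_nonneg[of "1 - q" "- l"] assms by (simp add: algebra_simps)
qed

definition sign_bit :: "bool \<Rightarrow> real" where
  "sign_bit b = (if b then 1 else -1)"

lemma sign_bit_mgf_le_1:
  fixes q l :: real
  assumes "0 \<le> q" "q \<le> 1"
  shows "q * exp (l * (sign_bit True - (2 * q - 1)) - l\<^sup>2 / 2)
       + (1 - q) * exp (l * (sign_bit False - (2 * q - 1)) - l\<^sup>2 / 2) \<le> 1"
  using hoeffding_lemma_coin[OF assms, of l]
  by (simp add: sign_bit_def exp_diff flip: add_divide_distrib)

lemma ex_partial_sum_Cons_iff: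
  assumes "\<not> c \<le> s"
  shows "(\<exists>k\<le>Suc n. c \<le> s + (\<Sum>t<k. z t ((b # bs) ! t)))
     \<longleftrightarrow> (\<exists>k\<le>n. c \<le> (s + z 0 b) + (\<Sum>t<k. z (Suc t) (bs ! t)))"
proof -
  have shift: "(\<Sum>t<Suc k. z t ((b # bs) ! t)) = z 0 b + (\<Sum>t<k. z (Suc t) (bs ! t))" for k
    unfolding sum.lessThan_Suc_shift by simp
  show ?thesis
  proof
    assume "\<exists>k\<le>Suc n. c \<le> s + (\<Sum>t<k. z t ((b # bs) ! t))"
    then obtain k where "k \<le> Suc n" "c \<le> s + (\<Sum>t<k. z t ((b # bs) ! t))" by blast
    with assms shift show "\<exists>k\<le>n. c \<le> (s + z 0 b) + (\<Sum>t<k. z (Suc t) (bs ! t))"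
      by (cases k) (auto simp: add.assoc)
  next
    assume "\<exists>k\<le>n. c \<le> (s + z 0 b) + (\<Sum>t<k. z (Suc t) (bs ! t))"
    then obtain k where "k \<le> n" "c \<le> (s + z 0 b) + (\<Sum>t<k. z (Suc t) (bs ! t))" by blast
    with shift show "\<exists>k\<le>Suc n. c \<le> s + (\<Sum>t<k. z t ((b # bs) ! t))"
      by (intro exI[of _ "Suc k"]) (simp add: add.assoc)
  qed
qed

lemma ville_inequality_bernoulli:
  assumes "set qs \<subseteq> {0..1}"
    and "\<And>t. t < length qs \<Longrightarrow> qs ! t * exp (z t True) + (1 - qs ! t) * exp (z t False) \<le> 1"
  shows "bernoulli_prob qs (\<lambda>bs. \<exists>k\<le>length qs. c \<le> s + (\<Sum>t<k. z t (bs ! t))) \<le> exp (s - c)"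
  using assms
proof (induction qs arbitrary: z s)
  case Nil
  then show ?case by (simp add: bernoulli_prob_Nil)
next
  case (Cons q qs)
  have q: "0 \<le> q" "q \<le> 1" "set qs \<subseteq> {0..1}" using Cons.prems(1) by auto
  show ?case
  proof (cases "c \<le> s")
    case True
    then show ?thesis
      using bernoulli_prob_le_1[OF Cons.prems(1)] by (meson one_le_exp_iff diff_ge_0_iff_ge order_trans)
  next
    case False
    let ?P = "\<lambda>b. bernoulli_prob qs (\<lambda>bs. \<exists>k\<le>length qs. c \<le> (s + z 0 b) + (\<Sum>t<k. z (Suc t) (bs ! t)))"
    have IH: "?P b \<le> exp (s - c) * exp (z 0 b)" for b
      using Cons.IH[OF q(3), of "\<lambda>t. z (Suc t)" "s + z 0 b"] Cons.prems(2)
      by (force simp flip: exp_add simp: algebra_simps)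
    have "bernoulli_prob (q # qs) (\<lambda>bs. \<exists>k\<le>length (q # qs). c \<le> s + (\<Sum>t<k. z t (bs ! t)))
        = q * ?P True + (1 - q) * ?P False"
      unfolding bernoulli_prob_Cons length_Cons ex_partial_sum_Cons_iff[OF False] ..
    also have "\<dots> \<le> exp (s - c) * (q * exp (z 0 True) + (1 - q) * exp (z 0 False))"
      using q IH[of True] IH[of False]
      by (simp add: distrib_left mult.left_commute add_mono mult_left_mono)
    also have "\<dots> \<le> exp (s - c)"
      using Cons.prems(2)[of 0] by simp
    finally show ?thesis .
  qed
qed

definition walk :: "bool list \<Rightarrow> nat \<Rightarrow> real" where
  "walk bs k = (\<Sum>t<k. sign_bit (bs ! t))"

definition walk_mean :: "real list \<Rightarrow> nat \<Rightarrow> real" where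
  "walk_mean qs k = (\<Sum>t<k. 2 * qs ! t - 1)"

lemma walk_exponential_maximal:
  assumes "set qs \<subseteq> {0..1}"
  shows "bernoulli_prob qs
           (\<lambda>bs. \<exists>k\<le>length qs. c \<le> l * (walk bs k - walk_mean qs k) - real k * l\<^sup>2 / 2)
         \<le> exp (- c)"
proof -
  have "l * (walk bs k - walk_mean qs k) - real k * l\<^sup>2 / 2
      = 0 + (\<Sum>t<k. l * (sign_bit (bs ! t) - (2 * qs ! t - 1)) - l\<^sup>2 / 2)" for bs k
    by (simp add: walk_def walk_mean_def sum_subtractf flip: sum_distrib_left)
  moreover have "bernoulli_prob qs (\<lambda>bs. \<exists>k\<le>length qs.
      c \<le> 0 + (\<Sum>t<k. l * (sign_bit (bs ! t) - (2 * qs ! t - 1)) - l\<^sup>2 / 2)) \<le> exp (0 - c)"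
    using assms by (intro ville_inequality_bernoulli sign_bit_mgf_le_1) (auto dest!: nth_mem)
  ultimately show ?thesis by simp
qed

section \<open>The critical values\<close>

lemma ln_ln_two_mult_ge:
  assumes "1 \<le> k"
  shows "-1/2 \<le> ln (ln (2 * real k))"
proof -
  have "ln 2 \<le> ln (2 * real k)"
    using assms by simp
  then have "ln (2/3) \<le> ln (ln (2 * real k))"
    using ln2_ge_two_thirds by (subst ln_le_cancel_iff) auto
  moreover have "1 - 3/2 \<le> ln (2/3 :: real)"
    using ln_le_minus_one[of "3/2"] by (simp add: ln_div)
  ultimately show ?thesis by simp
qed

lemma ln_5_2_ge: "1.56 \<le> ln (5.2 :: real)"
proof -
  have "1 - 1/1.3 \<le> ln (1.3 :: real)"
    using ln_le_minus_one[of "1/1.3"] by (simp add: ln_div)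
  moreover have "ln (5.2 :: real) = ln 2 + ln 2 + ln 1.3"
    using ln_mult[of 2 "2 * 1.3"] ln_mult[of 2 "1.3"] by simp
  ultimately show ?thesis
    using ln2_ge_two_thirds by simp
qed

lemma ln_div_ge_1_56:
  fixes \<gamma> :: real
  assumes "0 < \<gamma>" "\<gamma> < 1"
  shows "1.56 \<le> ln (5.2 / \<gamma>)"
proof -
  have "ln 5.2 \<le> ln (5.2 / \<gamma>)"
    using assms by (simp add: field_simps)
  then show ?thesis
    using ln_5_2_ge by simp
qed

lemma Ccrit_arg_ge:
  assumes "1 \<le> k" "0 < \<gamma>" "\<gamma> < 1"
  shows "0.6 \<le> ln (ln (2 * real k)) + 0.72 * ln (5.2 / \<gamma>)"
  using ln_ln_two_mult_ge[OF assms(1)] ln_div_ge_1_56[OF assms(2,3)] by (simp del: ln_div)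

lemma Ccrit_sq:
  assumes "1 \<le> k" "0 < \<gamma>" "\<gamma> < 1"
  shows "(Ccrit k \<gamma>)\<^sup>2 = 2.89 * (ln (ln (2 * real k)) + 0.72 * ln (5.2 / \<gamma>))"
  using Ccrit_arg_ge[OF assms] unfolding Ccrit_def power_mult_distrib
  by (simp add: power2_eq_square del: ln_div)

lemma Ccrit_gt_1:
  assumes "1 \<le> k" "0 < \<gamma>" "\<gamma> < 1"
  shows "1 < Ccrit k \<gamma>"
proof -
  have "1 / 1.7 < sqrt (ln (ln (2 * real k)) + 0.72 * ln (5.2 / \<gamma>))"
    by (rule real_less_rsqrt) (use Ccrit_arg_ge[OF assms] in \<open>simp add: power2_eq_square del: ln_div\<close>)
  then show ?thesis
    unfolding Ccrit_def by (simp add: field_simps)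
qed

lemma Ccrit_mono:
  assumes "1 \<le> k" "k \<le> k'"
  shows "Ccrit k \<gamma> \<le> Ccrit k' \<gamma>"
proof -
  have "0 < ln (2 * real k)"
    using assms by simp
  moreover have "ln (2 * real k) \<le> ln (2 * real k')"
    using assms by simp
  ultimately show ?thesis
    unfolding Ccrit_def by simp
qed

lemma exp_neg_half_Ccrit_sq_le:
  assumes "1 \<le> k" "0 < \<beta>" "\<beta> < 1"
  shows "exp (- (Ccrit k \<beta>)\<^sup>2 / 2) \<le> \<beta>"
proof -
  have "- (Ccrit k \<beta>)\<^sup>2 / 2 \<le> 0.7225 - ln (5.2 / \<beta>)"
    using Ccrit_sq[OF assms] ln_ln_two_mult_ge[OF assms(1)] ln_div_ge_1_56[OF assms(2,3)] by simp
  then have "exp (- (Ccrit k \<beta>)\<^sup>2 / 2) \<le> exp 0.7225 / exp (ln (5.2 / \<beta>))"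
    by (simp flip: exp_diff)
  also have "\<dots> = exp 0.7225 * (\<beta> / 5.2)"
    using assms by simp
  also have "exp 0.7225 \<le> exp (ln (5.2 :: real))"
    using ln_5_2_ge by (subst exp_le_cancel_iff) simp
  then have "exp 0.7225 \<le> (5.2 :: real)"
    by simp
  then have "exp 0.7225 * (\<beta> / 5.2) \<le> 5.2 * (\<beta> / 5.2)"
    using assms by (intro mult_right_mono) auto
  finally show ?thesis by simp
qed

lemma exp_neg_epoch_Ccrit_sq_le:
  assumes "1 \<le> j" "0 < \<gamma>" "\<gamma> < 1"
  shows "exp (- ((6 * sqrt 2 - 8) * (Ccrit (2 ^ j) \<gamma>)\<^sup>2))
           \<le> (real (j + 1) * ln 2) powr (-1.4) * (\<gamma> / 5.2)"
proof -
  let ?Y = "real (j + 1) * ln 2"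
  have "ln (2 * real ((2 :: nat) ^ j)) = ?Y"
    by (simp add: ln_realpow[symmetric] del: of_nat_Suc)
  then have Csq: "(Ccrit (2 ^ j) \<gamma>)\<^sup>2 = 2.89 * (ln ?Y + 0.72 * ln (5.2 / \<gamma>))"
    using Ccrit_sq[of "2 ^ j" \<gamma>] assms by simp
  have "4/3 \<le> ?Y"
    using assms ln2_ge_two_thirds mult_mono[of 2 "real (j + 1)" "2/3" "ln 2"] by simp
  then have Y: "0 \<le> ln ?Y" "1 \<le> ?Y"
    by simp_all
  have "1.4141 \<le> sqrt (2 :: real)"
    by (rule real_le_rsqrt) (simp add: power2_eq_square)
  \<comment> \<open>The constants 1.7 and 0.72 of the critical values are tuned for these two inequalities.\<close>
  then have "1.4 \<le> 2.89 * (6 * sqrt 2 - 8)" "1 \<le> 2.89 * 0.72 * (6 * sqrt 2 - 8)"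
    by simp_all
  then have "1.4 * ln ?Y \<le> (2.89 * (6 * sqrt 2 - 8)) * ln ?Y"
    and "1 * ln (5.2 / \<gamma>) \<le> (2.89 * 0.72 * (6 * sqrt 2 - 8)) * ln (5.2 / \<gamma>)"
    using Y ln_div_ge_1_56[OF assms(2,3)] by (intro mult_right_mono; simp)+
  moreover have "(6 * sqrt 2 - 8) * (Ccrit (2 ^ j) \<gamma>)\<^sup>2
      = (2.89 * (6 * sqrt 2 - 8)) * ln ?Y + (2.89 * 0.72 * (6 * sqrt 2 - 8)) * ln (5.2 / \<gamma>)"
    unfolding Csq by (simp add: algebra_simps)
  ultimately have "- ((6 * sqrt 2 - 8) * (Ccrit (2 ^ j) \<gamma>)\<^sup>2) \<le> - (1.4 * ln ?Y) - ln (5.2 / \<gamma>)"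
    by linarith
  then have "exp (- ((6 * sqrt 2 - 8) * (Ccrit (2 ^ j) \<gamma>)\<^sup>2)) \<le> exp (- (1.4 * ln ?Y)) * exp (- ln (5.2 / \<gamma>))"
    by (simp flip: exp_add)
  also have "\<dots> = ?Y powr (-1.4) * (\<gamma> / 5.2)"
    using Y assms by (simp add: powr_def exp_minus)
  finally show ?thesis .
qed

lemma powr_neg_1_4_le_diff:
  fixes x :: real
  assumes "2 \<le> x"
  shows "x powr (-1.4) \<le> 2.5 * ((x - 1) powr (-0.4) - x powr (-0.4))"
proof -
  have "((\<lambda>y. y powr (-0.4)) has_real_derivative (-0.4) * y powr (-0.4 - 1)) (at y)" if "x - 1 \<le> y" for y
    by (rule has_real_derivative_powr) (use assms that in simp)
  then obtain z where z: "x - 1 < z" "z < x"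
    "x powr (-0.4) - (x - 1) powr (-0.4) = (x - (x - 1)) * ((-0.4) * z powr (-0.4 - 1))"
    using MVT2[of "x - 1" x "\<lambda>y. y powr (-0.4)" "\<lambda>y. (-0.4) * y powr (-0.4 - 1)"] by auto
  have "x powr (-1.4) \<le> z powr (-1.4)"
    by (rule powr_mono2') (use z assms in auto)
  then show ?thesis
    using z(3) by simp
qed

lemma sum_powr_neg_1_4_le:
  "(\<Sum>j\<in>{1..n}. real (j + 1) powr (-1.4)) \<le> 2.5 * (1 - real (n + 1) powr (-0.4))"
proof (induction n)
  case 0
  then show ?case by simp
next
  case (Suc n)
  have "real (Suc n + 1) powr (-1.4) \<le> 2.5 * (real (n + 1) powr (-0.4) - real (Suc n + 1) powr (-0.4))"
    using powr_neg_1_4_le_diff[of "real (Suc n + 1)"] by simp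
  with Suc.IH show ?case
    by (simp add: sum.atLeast1_atMost_eq algebra_simps)
qed

lemma ln_2_powr_neg_1_4_le: "ln 2 powr (-1.4) \<le> (1.84 :: real)"
proof -
  have "(2/3 :: real) powr 1.5 = (2/3) * sqrt (2/3)"
    using powr_add[of "2/3 :: real" 1 "1/2"] by (simp add: powr_half_sqrt)
  moreover have "0.8164 \<le> sqrt (2/3 :: real)"
    by (rule real_le_rsqrt) (simp add: power2_eq_square)
  moreover have "(2/3 :: real) powr 1.5 \<le> (2/3) powr 1.4"
    by (rule powr_mono') auto
  moreover have "(2/3 :: real) powr 1.4 \<le> ln 2 powr 1.4"
    by (rule powr_mono2) (use ln2_ge_two_thirds in auto)
  ultimately have "0.5442 \<le> ln (2 :: real) powr 1.4"
    by simp
  then show ?thesis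
    by (simp add: powr_minus_divide divide_le_eq)
qed

lemma sum_epoch_weights_less: "(\<Sum>j\<in>{1..n}. (real (j + 1) * ln 2) powr (-1.4)) < 5.2"
proof -
  have "(\<Sum>j\<in>{1..n}. (real (j + 1) * ln 2) powr (-1.4))
      = ln 2 powr (-1.4) * (\<Sum>j\<in>{1..n}. real (j + 1) powr (-1.4))"
    by (simp add: powr_mult sum_distrib_left mult.commute)
  also have "\<dots> \<le> 1.84 * 2.5"
  proof (rule mult_mono)
    have "2.5 * (1 - real (n + 1) powr (-0.4)) \<le> 2.5"
      by simp
    then show "(\<Sum>j\<in>{1..n}. real (j + 1) powr (-1.4)) \<le> 2.5"
      using sum_powr_neg_1_4_le[of n] by linarith
  qed (use ln_2_powr_neg_1_4_le in \<open>auto intro: sum_nonneg\<close>)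
  finally show ?thesis by simp
qed

section \<open>Rejection probability for independent coin flips\<close>

definition rejects :: "real \<Rightarrow> nat \<Rightarrow> bool list \<Rightarrow> bool" where
  "rejects \<alpha> n bs \<longleftrightarrow> (\<exists>k\<in>{1..n}. Ccrit k \<alpha> * sqrt (real k) < walk bs k)"

lemma bernoulli_prob_rejects_ge:
  assumes qs: "set qs \<subseteq> {0..1}" and k: "k \<in> {1..length qs}" and \<beta>: "0 < \<beta>" "\<beta> < 1"
    and signal: "(Ccrit k \<alpha> + Ccrit k \<beta>) * sqrt (real k) \<le> walk_mean qs k"
  shows "1 - \<beta> \<le> bernoulli_prob qs (rejects \<alpha> (length qs))"
proof -
  let ?C = "Ccrit k \<beta>"
  define l where "l = - ?C / sqrt (real k)"
  have sqrt_k: "0 < sqrt (real k)"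
    using k by simp
  have l: "l \<le> 0" "l * (- (?C * sqrt (real k))) = ?C\<^sup>2" "real k * l\<^sup>2 = ?C\<^sup>2"
    using Ccrit_gt_1[of k \<beta>] k \<beta> sqrt_k by (auto simp: l_def power2_eq_square)
  have "bernoulli_prob qs (\<lambda>bs. \<not> Ccrit k \<alpha> * sqrt (real k) < walk bs k)
      \<le> bernoulli_prob qs (\<lambda>bs. \<exists>k'\<le>length qs.
           ?C\<^sup>2 / 2 \<le> l * (walk bs k' - walk_mean qs k') - real k' * l\<^sup>2 / 2)"
  proof (rule bernoulli_prob_mono[OF qs])
    fix bs
    assume "\<not> Ccrit k \<alpha> * sqrt (real k) < walk bs k"
    then have "walk bs k - walk_mean qs k \<le> - (?C * sqrt (real k))"
      using signal by (simp add: algebra_simps)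
    then have "?C\<^sup>2 \<le> l * (walk bs k - walk_mean qs k)"
      using mult_left_mono_neg[OF _ l(1)] l(2) by metis
    then show "\<exists>k'\<le>length qs. ?C\<^sup>2 / 2 \<le> l * (walk bs k' - walk_mean qs k') - real k' * l\<^sup>2 / 2"
      using k l(3) by (intro exI[of _ k]) auto
  qed
  also have "\<dots> \<le> exp (- (?C\<^sup>2 / 2))"
    by (rule walk_exponential_maximal[OF qs])
  also have "\<dots> \<le> \<beta>"
    using exp_neg_half_Ccrit_sq_le[of k \<beta>] k \<beta> by simp
  finally have "bernoulli_prob qs (\<lambda>bs. \<not> Ccrit k \<alpha> * sqrt (real k) < walk bs k) \<le> \<beta>" .
  moreover have "bernoulli_prob qs (\<lambda>bs. Ccrit k \<alpha> * sqrt (real k) < walk bs k)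
      \<le> bernoulli_prob qs (rejects \<alpha> (length qs))"
    using k by (intro bernoulli_prob_mono[OF qs]) (auto simp: rejects_def)
  ultimately show ?thesis
    using bernoulli_prob_compl[of qs "\<lambda>bs. Ccrit k \<alpha> * sqrt (real k) < walk bs k"] by linarith
qed

text \<open>On an epoch \<open>m \<le> x \<le> 2m\<close> the concave function \<open>c \<surd>x\<close> lies above its chord
  \<open>a + b x\<close> with \<open>a = c \<surd>m (2 - \<surd>2)\<close> and \<open>b = c (\<surd>2 - 1) / \<surd>m\<close>; hence for
  \<open>\<lambda> = 2b\<close> the exponent \<open>\<lambda> D - x \<lambda>\<^sup>2 / 2\<close> is at least \<open>2ab = (6\<surd>2 - 8) c\<^sup>2\<close>.\<close>

lemma epoch_exponent_bound:
  fixes c m x D :: real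
  assumes "0 \<le> c" "1 \<le> m" "m \<le> x" "x \<le> 2 * m" "c * sqrt x \<le> D"
  shows "(6 * sqrt 2 - 8) * c\<^sup>2
    \<le> (2 * (sqrt 2 - 1) * c / sqrt m) * D - x * (2 * (sqrt 2 - 1) * c / sqrt m)\<^sup>2 / 2"
proof -
  define w r v where "w = sqrt (2 :: real)" and "r = sqrt m" and "v = sqrt x"
  have w: "w * w = 2" "1 \<le> w"
    unfolding w_def by simp_all
  have r: "0 < r" "r * r = m" and v: "v * v = x"
    unfolding r_def v_def using assms by simp_all
  have "r \<le> v" "v \<le> w * r"
    unfolding r_def v_def w_def using assms by (simp_all flip: real_sqrt_mult)
  then have "(w - 1) * (v - r) * (v - w * r) \<le> 0"
    using w by (intro mult_nonneg_nonpos mult_nonneg_nonneg) auto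
  moreover have "(w - 1) * (v - r) * (v - w * r)
      = (w - 1) * (v * v) - (w * w - 1) * r * v + (w * w - w) * (r * r)"
    by (simp add: algebra_simps)
  ultimately have chord: "0 \<le> r * v - (w - 1) * x - (2 - w) * m"
    using w r v by (simp add: algebra_simps)
  have "2 * (w - 1) * c / r * (c * v) \<le> 2 * (w - 1) * c / r * D"
    using assms w r unfolding v_def by (intro mult_left_mono) auto
  moreover have "2 * (w - 1) * (2 - w) = 6 * w - 2 * (w * w) - 4"
    by (simp add: algebra_simps)
  then have "6 * w - 8 = 2 * (w - 1) * (2 - w)"
    using w by simp
  moreover have "2 * (w - 1) * c / r * (c * v) - x * (2 * (w - 1) * c / r)\<^sup>2 / 2
      - (2 * (w - 1) * (2 - w)) * c\<^sup>2
      = 2 * (w - 1) * c\<^sup>2 / (r * r) * (r * v - (w - 1) * x - (2 - w) * (r * r))"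
    using r(1) by (simp add: field_simps power2_eq_square)
  moreover have "0 \<le> 2 * (w - 1) * c\<^sup>2 / (r * r) * (r * v - (w - 1) * x - (2 - w) * (r * r))"
    using w r chord by (intro mult_nonneg_nonneg divide_nonneg_pos) auto
  ultimately show ?thesis
    unfolding w_def r_def by (smt (verit))
qed

lemma walk_excess_imp_two_le:
  assumes qs: "set qs \<subseteq> {1/2..1}" and \<gamma>: "0 < \<gamma>" "\<gamma> < 1" and k: "k \<in> {1..length qs}"
    and excess: "Ccrit k \<gamma> * sqrt (real k) < walk bs k - walk_mean qs k"
  shows "2 \<le> k"
proof (rule ccontr)
  assume "\<not> 2 \<le> k"
  then have "k = 1"
    using k by simp
  moreover have "walk bs 1 \<le> 1"
    by (simp add: walk_def sign_bit_def)
  moreover have "qs ! 0 \<in> set qs"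
    using k by (intro nth_mem) auto
  then have "0 \<le> walk_mean qs 1"
    using qs by (auto simp: walk_mean_def)
  moreover have "1 < Ccrit 1 \<gamma>"
    using Ccrit_gt_1 \<gamma> by simp
  ultimately show False
    using excess by simp
qed

definition epoch_slope :: "real \<Rightarrow> nat \<Rightarrow> real" where
  "epoch_slope \<gamma> j = 2 * (sqrt 2 - 1) * Ccrit (2 ^ j) \<gamma> / sqrt (2 ^ j)"

lemma rejects_imp_epoch_excess:
  assumes qs: "set qs \<subseteq> {1/2..1}" and \<gamma>: "0 < \<gamma>" "\<gamma> < 1"
    and signal: "\<forall>k\<in>{1..length qs}. walk_mean qs k \<le> (Ccrit k \<alpha> - Ccrit k \<gamma>) * sqrt (real k)"
    and "rejects \<alpha> (length qs) bs"
  shows "\<exists>j\<in>{1..length qs}. \<exists>k\<le>length qs. (6 * sqrt 2 - 8) * (Ccrit (2 ^ j) \<gamma>)\<^sup>2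
           \<le> epoch_slope \<gamma> j * (walk bs k - walk_mean qs k) - real k * (epoch_slope \<gamma> j)\<^sup>2 / 2"
proof -
  obtain k where k: "k \<in> {1..length qs}" "Ccrit k \<alpha> * sqrt (real k) < walk bs k"
    using assms(5) by (auto simp: rejects_def)
  have "walk_mean qs k \<le> (Ccrit k \<alpha> - Ccrit k \<gamma>) * sqrt (real k)"
    using signal k(1) by blast
  then have excess: "Ccrit k \<gamma> * sqrt (real k) < walk bs k - walk_mean qs k"
    using k(2) by (simp add: left_diff_distrib)
  have "2 \<le> k"
    using walk_excess_imp_two_le[OF qs \<gamma> k(1) excess] .
  then obtain j where j: "2 ^ j \<le> k" "k < 2 ^ (j + 1)"
    using ex_power_ivl1[of 2 k] by auto
  then have "real (2 ^ j) \<le> real k" "real k \<le> real (2 * 2 ^ j)"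
    by (simp_all only: of_nat_le_iff) simp_all
  then have epoch: "2 ^ j \<le> real k" "real k \<le> 2 * 2 ^ j"
    by simp_all
  have "1 \<le> j"
    using j \<open>2 \<le> k\<close> by (cases j) auto
  moreover have "j \<le> length qs"
    using j(1) less_exp[of j] k(1) unfolding atLeastAtMost_iff by linarith
  moreover have "Ccrit (2 ^ j) \<gamma> \<le> Ccrit k \<gamma>"
    by (rule Ccrit_mono) (use j in auto)
  then have "Ccrit (2 ^ j) \<gamma> * sqrt (real k) \<le> walk bs k - walk_mean qs k"
    using excess mult_right_mono[of "Ccrit (2 ^ j) \<gamma>" "Ccrit k \<gamma>" "sqrt (real k)"] by simp
  then have "(6 * sqrt 2 - 8) * (Ccrit (2 ^ j) \<gamma>)\<^sup>2
      \<le> epoch_slope \<gamma> j * (walk bs k - walk_mean qs k) - real k * (epoch_slope \<gamma> j)\<^sup>2 / 2"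
    unfolding epoch_slope_def
    by (rule epoch_exponent_bound[rotated 4]) (use Ccrit_gt_1[of "2 ^ j" \<gamma>] \<gamma> epoch in auto)
  ultimately show ?thesis
    using k(1) by auto
qed

lemma bernoulli_prob_rejects_less:
  assumes qs: "set qs \<subseteq> {1/2..1}" and \<gamma>: "0 < \<gamma>" "\<gamma> < 1"
    and signal: "\<forall>k\<in>{1..length qs}. walk_mean qs k \<le> (Ccrit k \<alpha> - Ccrit k \<gamma>) * sqrt (real k)"
  shows "bernoulli_prob qs (rejects \<alpha> (length qs)) < \<gamma>"
proof -
  let ?n = "length qs"
  let ?E = "\<lambda>j bs. \<exists>k\<le>?n. (6 * sqrt 2 - 8) * (Ccrit (2 ^ j) \<gamma>)\<^sup>2
              \<le> epoch_slope \<gamma> j * (walk bs k - walk_mean qs k) - real k * (epoch_slope \<gamma> j)\<^sup>2 / 2"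
  have qs01: "set qs \<subseteq> {0..1}"
    using qs by auto
  have "bernoulli_prob qs (rejects \<alpha> ?n) \<le> bernoulli_prob qs (\<lambda>bs. \<exists>j\<in>{1..?n}. ?E j bs)"
    using rejects_imp_epoch_excess[OF qs \<gamma> signal] by (intro bernoulli_prob_mono[OF qs01])
  also have "\<dots> \<le> (\<Sum>j\<in>{1..?n}. bernoulli_prob qs (?E j))"
    by (rule bernoulli_prob_ex_le_sum[OF qs01]) simp
  also have "\<dots> \<le> (\<Sum>j\<in>{1..?n}. exp (- ((6 * sqrt 2 - 8) * (Ccrit (2 ^ j) \<gamma>)\<^sup>2)))"
    by (intro sum_mono walk_exponential_maximal[OF qs01])
  also have "\<dots> \<le> (\<Sum>j\<in>{1..?n}. (real (j + 1) * ln 2) powr (-1.4) * (\<gamma> / 5.2))"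
    using exp_neg_epoch_Ccrit_sq_le[OF _ \<gamma>] by (intro sum_mono) simp
  also have "\<dots> = (\<Sum>j\<in>{1..?n}. (real (j + 1) * ln 2) powr (-1.4)) * (\<gamma> / 5.2)"
    by (rule sum_distrib_right[symmetric])
  also have "\<dots> < 5.2 * (\<gamma> / 5.2)"
    using sum_epoch_weights_less \<gamma> by (intro mult_strict_right_mono) auto
  finally show ?thesis
    by simp
qed

section \<open>Signs of unit-variance Gaussians\<close>

abbreviation normal_unit :: "real \<Rightarrow> real measure" where
  "normal_unit m \<equiv> density lborel (\<lambda>x. ennreal (normal_density m 1 x))"

lemma prob_space_normal_unit: "prob_space (normal_unit m)"
  by (rule prob_space_normal_density) simp

lemma emeasure_normal_unit:
  "A \<in> sets borel \<Longrightarrow>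
    emeasure (normal_unit m) A = (\<integral>\<^sup>+x. ennreal (normal_density m 1 x) * indicator A x \<partial>lborel)"
  by (subst emeasure_density) auto

lemma measure_normal_unit_le_reflected:
  assumes A: "A \<in> sets borel" and B: "B \<in> sets borel" and AB: "\<And>x. x \<in> B \<longleftrightarrow> -x \<in> A"
    and le: "\<And>x. x \<in> B \<Longrightarrow> normal_density m 1 (-x) \<le> normal_density m 1 x"
  shows "measure (normal_unit m) A \<le> measure (normal_unit m) B"
proof -
  interpret prob_space "normal_unit m"
    by (rule prob_space_normal_unit)
  let ?g = "\<lambda>x. ennreal (normal_density m 1 x) * indicator A x"
  have "emeasure (normal_unit m) A = (\<integral>\<^sup>+x. ?g x \<partial>distr lborel borel uminus)"
    using emeasure_normal_unit[OF A] by (simp add: lborel_distr_uminus)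
  also have "\<dots> = (\<integral>\<^sup>+x. ?g (-x) \<partial>lborel)"
    using A by (intro nn_integral_distr) auto
  also have "\<dots> \<le> (\<integral>\<^sup>+x. ennreal (normal_density m 1 x) * indicator B x \<partial>lborel)"
    using AB le by (intro nn_integral_mono) (auto simp: indicator_def)
  also have "\<dots> = emeasure (normal_unit m) B"
    using emeasure_normal_unit[OF B] by simp
  finally show ?thesis
    by (simp add: emeasure_eq_measure)
qed

lemma normal_density_neg_le:
  assumes "0 \<le> m" "0 \<le> x"
  shows "normal_density m 1 (-x) \<le> normal_density m 1 x"
proof -
  have "(x - m)\<^sup>2 \<le> (-x - m)\<^sup>2"
    using assms by (simp add: power2_eq_square algebra_simps)
  then show ?thesis
    unfolding normal_density_def by (intro mult_left_mono) auto
qed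

lemma measure_normal_unit_neg_plus_pos:
  "measure (normal_unit m) {..<0} + measure (normal_unit m) {0<..} = 1"
proof -
  interpret prob_space "normal_unit m"
    by (rule prob_space_normal_unit)
  have "emeasure (normal_unit m) {0} = 0"
    by (simp add: emeasure_normal_unit)
  then have "measure (normal_unit m) {0} = 0"
    by (simp add: emeasure_eq_measure)
  moreover have "space (normal_unit m) = ({..<0} \<union> {0}) \<union> {0<..}"
    by auto
  then have "prob (space (normal_unit m)) = prob {..<0} + prob {0} + prob {0<..}"
    by (simp only:) (subst finite_measure_Union; (subst finite_measure_Union)?; auto)
  ultimately show ?thesis
    using prob_space by simp
qed

lemma measure_normal_unit_pos_ge_half:
  assumes "0 \<le> m"
  shows "1/2 \<le> measure (normal_unit m) {0<..}"
  using measure_normal_unit_le_reflected[of "{..<0}" "{0<..}" m] normal_density_neg_le[OF assms]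
    measure_normal_unit_neg_plus_pos[of m]
  by auto

lemma measure_std_normal_neg: "measure (normal_unit 0) {..<0} = 1/2"
  using measure_normal_unit_le_reflected[of "{..<0}" "{0<..}" 0]
    measure_normal_unit_le_reflected[of "{0<..}" "{..<0}" 0]
    measure_normal_unit_neg_plus_pos[of 0]
  by (auto simp: normal_density_def)

lemma measure_std_normal_interval_pos:
  assumes "0 < z"
  shows "0 < measure (normal_unit 0) {0<..z}"
proof -
  interpret prob_space "normal_unit 0"
    by (rule prob_space_normal_unit)
  have "ennreal (normal_density 0 1 z * z)
      = (\<integral>\<^sup>+x. ennreal (normal_density 0 1 z) * indicator {0<..z} x \<partial>lborel)"
    using assms by (simp add: nn_integral_cmult_indicator ennreal_mult)
  also have "\<dots> \<le> (\<integral>\<^sup>+x. ennreal (normal_density 0 1 x) * indicator {0<..z} x \<partial>lborel)"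
  proof (rule nn_integral_mono)
    fix x :: real
    have "normal_density 0 1 z \<le> normal_density 0 1 x" if "x \<in> {0<..z}"
    proof -
      have "x\<^sup>2 \<le> z\<^sup>2"
        using that by (intro power_mono) auto
      then show ?thesis
        unfolding normal_density_def by (intro mult_left_mono) auto
    qed
    then show "ennreal (normal_density 0 1 z) * indicator {0<..z} x
        \<le> ennreal (normal_density 0 1 x) * indicator {0<..z} x"
      by (simp add: indicator_def)
  qed
  also have "\<dots> = emeasure (normal_unit 0) {0<..z}"
    by (simp add: emeasure_normal_unit)
  finally have "normal_density 0 1 z * z \<le> measure (normal_unit 0) {0<..z}"
    by (simp add: emeasure_eq_measure)
  moreover have "0 < normal_density 0 1 z * z"
    using assms normal_density_pos[of 1 0 z] by simp
  ultimately show ?thesis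
    by linarith
qed

lemma Phi_gt_half:
  assumes "0 < z"
  shows "1/2 < Phi z"
proof -
  interpret prob_space "normal_unit 0"
    by (rule prob_space_normal_unit)
  have "{..z} = {..<0} \<union> {0<..z} \<union> {0}"
    using assms by auto
  then have "Phi z \<ge> measure (normal_unit 0) ({..<0} \<union> {0<..z})"
    unfolding Phi_def by (intro finite_measure_mono) auto
  also have "measure (normal_unit 0) ({..<0} \<union> {0<..z}) = 1/2 + measure (normal_unit 0) {0<..z}"
    using measure_std_normal_neg by (subst finite_measure_Union) auto
  finally show ?thesis
    using measure_std_normal_interval_pos[OF assms] by simp
qed

lemma mono_Phi: "mono Phi"
proof
  interpret prob_space "normal_unit 0"
    by (rule prob_space_normal_unit)
  fix x y :: real
  assume "x \<le> y"
  then show "Phi x \<le> Phi y"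
    unfolding Phi_def by (intro finite_measure_mono) auto
qed

lemma borel_measurable_Phi[measurable]: "Phi \<in> borel_measurable borel"
  by (rule borel_measurable_mono[OF mono_Phi])

lemma measure_Phi_gt_half_ge:
  assumes "0 \<le> m"
  shows "1/2 \<le> measure (normal_unit m) {z. 1/2 < Phi z}"
proof -
  interpret prob_space "normal_unit m"
    by (rule prob_space_normal_unit)
  have "measure (normal_unit m) {0<..} \<le> measure (normal_unit m) {z. 1/2 < Phi z}"
    using Phi_gt_half by (intro finite_measure_mono) auto
  then show ?thesis
    using measure_normal_unit_pos_ge_half[OF assms] by simp
qed

section \<open>Reduction of the test to coin flips\<close>

definition success_prob :: "(nat \<Rightarrow> real) \<Rightarrow> nat \<Rightarrow> real" where
  "success_prob \<mu> i = measure (normal_unit (\<mu> i)) {z. 1/2 < Phi z}"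

definition signs :: "nat list \<Rightarrow> (nat \<Rightarrow> real) \<Rightarrow> bool list" where
  "signs js \<omega> = map (\<lambda>j. 1/2 < Phi (\<omega> j)) js"

lemma hfun_pval: "hfun (pval z) = sign_bit (1/2 < Phi z)"
  unfolding hfun_def pval_def sign_bit_def by auto

lemma Zmodel_eq_PiM: "Zmodel n \<mu> = (\<Pi>\<^sub>M i\<in>{1..n}. normal_unit (\<mu> i))"
  unfolding Zmodel_def ..

lemma finite_product_prob_space_normal_unit:
  "finite_product_prob_space (\<lambda>i. normal_unit (\<mu> i)) {1..n :: nat}"
proof -
  interpret product_prob_space "\<lambda>i. normal_unit (\<mu> i)"
    by (intro product_prob_spaceI prob_space_normal_unit)
  show ?thesis
    by unfold_locales simp
qed

lemma prob_space_Zmodel: "prob_space (Zmodel n \<mu>)"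
  unfolding Zmodel_eq_PiM by (intro prob_space_PiM prob_space_normal_unit)

definition sign_pattern_set :: "nat list \<Rightarrow> bool list \<Rightarrow> nat \<Rightarrow> real set" where
  "sign_pattern_set js bs i = {z. \<forall>t<length js. js ! t = i \<longrightarrow> (1/2 < Phi z) = bs ! t}"

lemma sets_sign_pattern_set[measurable]: "sign_pattern_set js bs i \<in> sets borel"
  unfolding sign_pattern_set_def by measurable

lemma sign_pattern_event_eq_PiE:
  assumes "set js \<subseteq> {1..n}" "length bs = length js"
  shows "{\<omega> \<in> space (Zmodel n \<mu>). signs js \<omega> = bs}
       = PiE {1..n} (sign_pattern_set js bs)"
proof -
  have space: "space (Zmodel n \<mu>) = PiE {1..n} (\<lambda>_. UNIV)"
    unfolding Zmodel_eq_PiM by (simp add: space_PiM)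
  have pattern: "signs js \<omega> = bs
      \<longleftrightarrow> (\<forall>t<length js. (1/2 < Phi (\<omega> (js ! t))) = bs ! t)" for \<omega>
    using assms(2) by (auto simp: signs_def list_eq_iff_nth_eq)
  show ?thesis
  proof (intro set_eqI iffI)
    fix \<omega>
    assume "\<omega> \<in> {\<omega> \<in> space (Zmodel n \<mu>). signs js \<omega> = bs}"
    then show "\<omega> \<in> PiE {1..n} (sign_pattern_set js bs)"
      unfolding space pattern sign_pattern_set_def by (auto simp: PiE_iff)
  next
    fix \<omega>
    assume \<omega>: "\<omega> \<in> PiE {1..n} (sign_pattern_set js bs)"
    have "(1/2 < Phi (\<omega> (js ! t))) = bs ! t" if "t < length js" for t
    proof -
      have "js ! t \<in> {1..n}"
        using assms(1) that nth_mem by blast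
      then show ?thesis
        using \<omega> that by (auto simp: PiE_iff sign_pattern_set_def)
    qed
    then show "\<omega> \<in> {\<omega> \<in> space (Zmodel n \<mu>). signs js \<omega> = bs}"
      using \<omega> unfolding space pattern by (auto simp: PiE_iff)
  qed
qed

lemma measure_sign_pattern_event:
  assumes "distinct js" "set js \<subseteq> {1..n}" "length bs = length js"
  shows "measure (Zmodel n \<mu>) {\<omega> \<in> space (Zmodel n \<mu>). signs js \<omega> = bs}
       = bernoulli_weight (map (success_prob \<mu>) js) bs"
proof -
  interpret finite_product_prob_space "\<lambda>i. normal_unit (\<mu> i)" "{1..n}"
    by (rule finite_product_prob_space_normal_unit)
  let ?P = "\<lambda>i. measure (normal_unit (\<mu> i)) (sign_pattern_set js bs i)"
  have "measure (Zmodel n \<mu>) {\<omega> \<in> space (Zmodel n \<mu>). signs js \<omega> = bs}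
      = measure (Zmodel n \<mu>) (PiE {1..n} (sign_pattern_set js bs))"
    by (simp only: sign_pattern_event_eq_PiE[OF assms(2,3)])
  also have "\<dots> = (\<Prod>i\<in>{1..n}. ?P i)"
    unfolding Zmodel_eq_PiM by (rule prob_times) simp
  also have "\<dots> = (\<Prod>i\<in>set js. ?P i)"
  proof (rule prod.mono_neutral_right)
    show "\<forall>i\<in>{1..n} - set js. ?P i = 1"
      using prob_space.prob_space[OF prob_space_normal_unit]
      by (auto simp: sign_pattern_set_def in_set_conv_nth)
  qed (use assms in auto)
  also have "\<dots> = (\<Prod>t<length js. ?P (js ! t))"
    using prod.reindex[OF inj_on_nth[OF assms(1), of "{..<length js}"], of ?P]
    by (simp add: lessThan_atLeast0 atLeast0LessThan[symmetric] nth_image)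
  also have "\<dots> = bernoulli_weight (map (success_prob \<mu>) js) bs"
    unfolding bernoulli_weight_def
  proof (rule prod.cong)
    fix t
    assume t: "t \<in> {..<length (map (success_prob \<mu>) js)}"
    have "sign_pattern_set js bs (js ! t) = {z. (1/2 < Phi z) = bs ! t}"
      using t assms(1) by (auto simp: sign_pattern_set_def nth_eq_iff_index_eq)
    moreover have "{z. \<not> 1/2 < Phi z} = space (normal_unit (\<mu> (js ! t))) - {z. 1/2 < Phi z}"
      by auto
    ultimately show "?P (js ! t)
        = (if bs ! t then map (success_prob \<mu>) js ! t else 1 - map (success_prob \<mu>) js ! t)"
      using t prob_space.prob_compl[OF prob_space_normal_unit, of "{z. 1/2 < Phi z}" "\<mu> (js ! t)"]
      by (auto simp: success_prob_def)
  qed simp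
  finally show ?thesis .
qed

lemma measure_sign_event_eq_bernoulli_prob:
  assumes "distinct js" "set js \<subseteq> {1..n}"
  shows "measure (Zmodel n \<mu>) {\<omega> \<in> space (Zmodel n \<mu>). E (signs js \<omega>)}
       = bernoulli_prob (map (success_prob \<mu>) js) E"
proof -
  interpret prob_space "Zmodel n \<mu>"
    by (rule prob_space_Zmodel)
  let ?B = "{bs. length bs = length js \<and> E bs}"
  let ?F = "\<lambda>bs. {\<omega> \<in> space (Zmodel n \<mu>). signs js \<omega> = bs}"
  have "{\<omega> \<in> space (Zmodel n \<mu>). E (signs js \<omega>)} = (\<Union>bs\<in>?B. ?F bs)"
    by (auto simp: signs_def)
  moreover have "?F bs \<in> sets (Zmodel n \<mu>)" if "bs \<in> ?B" for bs
    using that sign_pattern_event_eq_PiE[OF assms(2)] unfolding Zmodel_eq_PiM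
    by (simp add: sets_PiM_I_finite)
  then have "measure (Zmodel n \<mu>) (\<Union>bs\<in>?B. ?F bs) = (\<Sum>bs\<in>?B. measure (Zmodel n \<mu>) (?F bs))"
    by (intro finite_measure_finite_Union) (auto intro: finite_bool_lists simp: disjoint_family_on_def)
  ultimately show ?thesis
    using measure_sign_pattern_event[OF assms] by (simp add: bernoulli_prob_def)
qed

lemma nested_sets_eq_set_take:
  assumes "\<forall>k\<in>{1..n}. card (M k) = k"
    and "\<forall>k. 1 \<le> k \<and> k < n \<longrightarrow> M k \<subset> M (Suc k)"
  shows "\<exists>js. length js = n \<and> distinct js \<and> (\<forall>k\<in>{1..n}. M k = set (take k js))"
  using assms
proof (induction n)
  case 0
  then show ?case by simp
next
  case (Suc n)
  obtain js where js: "length js = n" "distinct js" "\<forall>k\<in>{1..n}. M k = set (take k js)"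
    using Suc.IH Suc.prems by force
  have sub: "set js \<subseteq> M (Suc n)"
  proof (cases n)
    case (Suc n')
    then have "M n = set js"
      using js by auto
    then show ?thesis
      using Suc.prems(2) \<open>n = Suc n'\<close> by auto
  qed (use js in simp)
  have "card (M (Suc n) - set js) = card (M (Suc n)) - card (set js)"
    by (rule card_Diff_subset[OF List.finite_set sub])
  also have "\<dots> = 1"
    using Suc.prems(1) js by (simp add: distinct_card)
  finally obtain x where x: "M (Suc n) - set js = {x}"
    by (rule card_1_singletonE)
  then have Msuc: "M (Suc n) = insert x (set js)" "x \<notin> set js"
    using sub by auto
  show ?case
  proof (intro exI[of _ "js @ [x]"] conjI ballI)
    fix k
    assume k: "k \<in> {1..Suc n}"
    show "M k = set (take k (js @ [x]))"
    proof (cases "k \<le> n")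
      case True
      then show ?thesis
        using js k by auto
    next
      case False
      then have "k = Suc n"
        using k by auto
      then show ?thesis
        using js Msuc by auto
    qed
  qed (use js Msuc in auto)
qed

lemma sum_set_take:
  assumes "distinct js" "k \<le> length js"
  shows "sum f (set (take k js)) = (\<Sum>t<k. f (js ! t))"
  using assms by (simp add: sum.distinct_set_conv_list sum_list_sum_nth atLeast0LessThan)

lemma Sfun_rind_eq_success_prob:
  assumes "i \<in> {1..n}"
  shows "Sfun n \<mu> i (rind \<mu> i) = success_prob \<mu> i"
proof -
  interpret prob_space "Zmodel n \<mu>"
    by (rule prob_space_Zmodel)
  have "{\<omega> \<in> space (Zmodel n \<mu>). hfun (pval (\<omega> i)) = 1 \<and> rind \<mu> i = rind \<mu> i}
      = {\<omega> \<in> space (Zmodel n \<mu>). signs [i] \<omega> = [True]}"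
    by (auto simp: hfun_pval sign_bit_def signs_def)
  then show ?thesis
    using measure_sign_pattern_event[of "[i]" n "[True]" \<mu>] assms
    by (simp add: Sfun_def cond_prob_def bernoulli_weight_def prob_space)
qed

lemma signal_eq_walk_mean:
  assumes "distinct js" "set js \<subseteq> {1..n}" "length js = n" "k \<in> {1..n}" "M k = set (take k js)"
  shows "signal n \<mu> M k = walk_mean (map (success_prob \<mu>) js) k"
proof -
  have "rind \<mu> i * (2 * Sfun n \<mu> i 1 - 1) + (1 - rind \<mu> i) * (2 * Sfun n \<mu> i 0 - 1)
      = 2 * success_prob \<mu> i - 1" if "i \<in> {1..n}" for i
    using Sfun_rind_eq_success_prob[OF that, of \<mu>] by (auto simp: rind_def split: if_splits)
  moreover have "set (take k js) \<subseteq> {1..n}"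
    using assms(2) set_take_subset by fastforce
  ultimately have "signal n \<mu> M k = (\<Sum>i\<in>set (take k js). 2 * success_prob \<mu> i - 1)"
    unfolding signal_def assms(5) by (intro sum.cong) auto
  also have "\<dots> = walk_mean (map (success_prob \<mu>) js) k"
    using assms by (simp add: sum_set_take walk_mean_def)
  finally show ?thesis .
qed

lemma power_eq_bernoulli_prob:
  assumes "distinct js" "set js \<subseteq> {1..n}" "length js = n" "\<forall>k\<in>{1..n}. M k = set (take k js)"
  shows "power n \<mu> M \<alpha> = bernoulli_prob (map (success_prob \<mu>) js) (rejects \<alpha> n)"
proof -
  have "(\<Sum>i\<in>M k. hfun (pval (\<omega> i))) = walk (signs js \<omega>) k"
    if "k \<in> {1..n}" for k \<omega>
    using assms that by (simp add: sum_set_take hfun_pval walk_def signs_def)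
  then have "{\<omega> \<in> space (Zmodel n \<mu>). \<exists>k\<in>{1..n}. (\<Sum>i\<in>M k. hfun (pval (\<omega> i))) > Ccrit k \<alpha> * sqrt (real k)}
      = {\<omega> \<in> space (Zmodel n \<mu>). rejects \<alpha> n (signs js \<omega>)}"
    unfolding rejects_def by auto
  then show ?thesis
    unfolding power_def using measure_sign_event_eq_bernoulli_prob[OF assms(1,2)] by simp
qed

theorem lemma1:
  fixes n :: nat and \<mu> :: "nat \<Rightarrow> real" and \<alpha> \<beta> :: real and M :: "nat \<Rightarrow> nat set"
  assumes "n \<ge> 1"
    and "\<forall>i\<in>{1..n}. \<mu> i \<ge> 0"
    and "0 < \<alpha>" "\<alpha> < 1" "0 < \<beta>" "\<beta> < 1"
    and "\<forall>k\<in>{1..n}. M k \<subseteq> {1..n} \<and> card (M k) = k"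
    and "\<forall>k. 1 \<le> k \<and> k < n \<longrightarrow> M k \<subset> M (Suc k)"
  shows "((\<exists>k\<in>{1..n}. signal n \<mu> M k \<ge> (Ccrit k \<alpha> + Ccrit k \<beta>) * sqrt (real k))
            \<longrightarrow> power n \<mu> M \<alpha> \<ge> 1 - \<beta>)
       \<and> ((\<forall>k\<in>{1..n}. signal n \<mu> M k \<le> (Ccrit k \<alpha> - Ccrit k (1 - \<beta>)) * sqrt (real k))
            \<longrightarrow> power n \<mu> M \<alpha> < 1 - \<beta>)"
proof -
  obtain js where js: "length js = n" "distinct js" "\<forall>k\<in>{1..n}. M k = set (take k js)"
    using nested_sets_eq_set_take[of n M] assms(7,8) by auto
  then have js_range: "set js \<subseteq> {1..n}"
    using assms(1,7) by (metis atLeastAtMost_iff order_refl take_all)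
  define qs where "qs = map (success_prob \<mu>) js"
  have "success_prob \<mu> i \<in> {1/2..1}" if "i \<in> set js" for i
    using that js_range assms(2) measure_Phi_gt_half_ge[of "\<mu> i"]
      prob_space.prob_le_1[OF prob_space_normal_unit, of "\<mu> i"]
    unfolding success_prob_def by auto
  then have qs: "set qs \<subseteq> {1/2..1}" "set qs \<subseteq> {0..1}"
    by (force simp: qs_def)+
  have n: "length qs = n"
    by (simp add: qs_def js)
  have power: "power n \<mu> M \<alpha> = bernoulli_prob qs (rejects \<alpha> (length qs))"
    using power_eq_bernoulli_prob[OF js(2) js_range js(1,3)] by (simp add: qs_def js)
  have signal: "signal n \<mu> M k = walk_mean qs k" if "k \<in> {1..n}" for k
    using signal_eq_walk_mean[OF js(2) js_range js(1) that] js(3) that by (simp add: qs_def)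
  show ?thesis
  proof (intro conjI impI)
    assume "\<exists>k\<in>{1..n}. signal n \<mu> M k \<ge> (Ccrit k \<alpha> + Ccrit k \<beta>) * sqrt (real k)"
    then obtain k where "k \<in> {1..length qs}" "(Ccrit k \<alpha> + Ccrit k \<beta>) * sqrt (real k) \<le> walk_mean qs k"
      using signal n by auto
    then show "power n \<mu> M \<alpha> \<ge> 1 - \<beta>"
      unfolding power using bernoulli_prob_rejects_ge[OF qs(2) _ assms(5,6)] by blast
  next
    assume "\<forall>k\<in>{1..n}. signal n \<mu> M k \<le> (Ccrit k \<alpha> - Ccrit k (1 - \<beta>)) * sqrt (real k)"
    then have "\<forall>k\<in>{1..length qs}. walk_mean qs k \<le> (Ccrit k \<alpha> - Ccrit k (1 - \<beta>)) * sqrt (real k)"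
      using signal n by auto
    then show "power n \<mu> M \<alpha> < 1 - \<beta>"
      unfolding power using bernoulli_prob_rejects_less[OF qs(1)] assms(5,6) by simp
  qed
qed

end
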